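(* Let $\mathcal{G}$ be a connected undirected unweighted graph with $n\ge 2$ vertices, $s\ne t$ vertices, $\epsilon\in(0,1)$, and let $L$ be an integer with $L\ge 2\kappa(\mathcal{L})\log\frac{n}{\epsilon}$. Then $r_{\mathcal{G},L}(s,t)\approx_\epsilon r_{\mathcal{G}}(s,t)$.
   Context: $\mathbf{D}$ is the degree matrix, $\mathbf{A}$ the adjacency matrix, $\mathbf{L}=\mathbf{D}-\mathbf{A}$, $\mathbf{P}=\mathbf{A}\mathbf{D}^{-1}$, $\mathcal{L}=\mathbf{D}^{-1/2}\mathbf{L}\mathbf{D}^{-1/2}$ the normalized Laplacian, and $\kappa(\mathcal{L})=\lambda_{\max}(\mathcal{L})/\lambda_2(\mathcal{L})$ with $\lambda_2(\mathcal{L})$ the smallest nonzero eigenvalue. $r_{\mathcal{G}}(s,t)=(\mathbf{e}_s-\mathbf{e}_t)^T\mathbf{L}^\dagger(\mathbf{e}_s-\mathbf{e}_t)$ and the $L$-step truncated effective resistance is $r_{\mathcal{G},L}(s,t)=\frac{1}{2}(\mathbf{e}_s-\mathbf{e}_t)^T\mathbf{D}^{-1}\sum_{l=0}^{L}(\frac12\mathbf{I}+\frac12\mathbf{P})^l(\mathbf{e}_s-\mathbf{e}_t)$. $x\approx_\epsilon y$ means $(1-\epsilon)y\le x\le(1+\epsilon)y$; $\log$ is the natural logarithm. *)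

theory Defs
  imports "HOL-Analysis.Analysis"
begin

definition simple_graph :: "('n::finite \<Rightarrow> 'n \<Rightarrow> bool) \<Rightarrow> bool" where
  "simple_graph E \<longleftrightarrow> (\<forall>u v. E u v \<longrightarrow> E v u) \<and> (\<forall>u. \<not> E u u)"

definition connected_graph :: "('n::finite \<Rightarrow> 'n \<Rightarrow> bool) \<Rightarrow> bool" where
  "connected_graph E \<longleftrightarrow> (\<forall>u v. (\<lambda>x y. E x y)\<^sup>*\<^sup>* u v)"

definition adj_mat :: "('n::finite \<Rightarrow> 'n \<Rightarrow> bool) \<Rightarrow> real^'n^'n" where
  "adj_mat E = (\<chi> i j. if E i j then 1 else 0)"

definition degree :: "('n::finite \<Rightarrow> 'n \<Rightarrow> bool) \<Rightarrow> 'n \<Rightarrow> real" where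
  "degree E u = real (card {v. E u v})"

definition diag_mat :: "('n::finite \<Rightarrow> real) \<Rightarrow> real^'n^'n" where
  "diag_mat d = (\<chi> i j. if i = j then d i else 0)"

definition deg_mat :: "('n::finite \<Rightarrow> 'n \<Rightarrow> bool) \<Rightarrow> real^'n^'n" where
  "deg_mat E = diag_mat (degree E)"

definition lap_mat :: "('n::finite \<Rightarrow> 'n \<Rightarrow> bool) \<Rightarrow> real^'n^'n" where
  "lap_mat E = deg_mat E - adj_mat E"

definition walk_mat :: "('n::finite \<Rightarrow> 'n \<Rightarrow> bool) \<Rightarrow> real^'n^'n" where
  "walk_mat E = adj_mat E ** diag_mat (\<lambda>u. 1 / degree E u)"

definition norm_lap :: "('n::finite \<Rightarrow> 'n \<Rightarrow> bool) \<Rightarrow> real^'n^'n" where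
  "norm_lap E = diag_mat (\<lambda>u. 1 / sqrt (degree E u)) ** lap_mat E
                 ** diag_mat (\<lambda>u. 1 / sqrt (degree E u))"

definition eigenvalues :: "real^'n::finite^'n \<Rightarrow> real set" where
  "eigenvalues M = {c. \<exists>v. v \<noteq> 0 \<and> M *v v = c *\<^sub>R v}"

definition lambda_max :: "real^'n^'n \<Rightarrow> real" where
  "lambda_max M = Max (eigenvalues M)"

definition lambda_2 :: "real^'n^'n \<Rightarrow> real" where
  "lambda_2 M = Min (eigenvalues M - {0})"

definition cond_num :: "real^'n^'n \<Rightarrow> real" where
  "cond_num M = lambda_max M / lambda_2 M"

definition pinv :: "real^'n^'n \<Rightarrow> real^'n^'n" where
  "pinv A = (THE X. A ** X ** A = A \<and> X ** A ** X = X \<and>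
                    transpose (A ** X) = A ** X \<and> transpose (X ** A) = X ** A)"

primrec mpow :: "real^'n^'n \<Rightarrow> nat \<Rightarrow> real^'n^'n" where
  "mpow M 0 = mat 1"
| "mpow M (Suc k) = M ** mpow M k"

definition unitv :: "'n::finite \<Rightarrow> real^'n" where
  "unitv s = (\<chi> i. if i = s then 1 else 0)"

definition eff_res :: "('n::finite \<Rightarrow> 'n \<Rightarrow> bool) \<Rightarrow> 'n \<Rightarrow> 'n \<Rightarrow> real" where
  "eff_res E s t = (let b = unitv s - unitv t in b \<bullet> (pinv (lap_mat E) *v b))"

definition trunc_eff_res :: "('n::finite \<Rightarrow> 'n \<Rightarrow> bool) \<Rightarrow> nat \<Rightarrow> 'n \<Rightarrow> 'n \<Rightarrow> real" where
  "trunc_eff_res E L s t = (let b = unitv s - unitv t;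
      Q = (1/2) *\<^sub>R mat 1 + (1/2) *\<^sub>R walk_mat E in
      (1/2) * (b \<bullet> ((diag_mat (\<lambda>u. 1 / degree E u) ** (\<Sum>l\<in>{0..L}. mpow Q l)) *v b)))"

definition approx_eps :: "real \<Rightarrow> real \<Rightarrow> real \<Rightarrow> bool" where
  "approx_eps \<epsilon> x y \<longleftrightarrow> (1 - \<epsilon>) * y \<le> x \<and> x \<le> (1 + \<epsilon>) * y"

end

theory Submission
  imports Defs
begin

(*
  Let \<mu>_b, b \<in> B, be an orthonormal eigenbasis of the (symmetric) normalized Laplacian
  NL = D^(-1/2) L D^(-1/2) and put x = D^(-1/2) (e_s - e_t). Since L L^+ = I - J/n, where
  L^+ is computed from the inverse of the nonsingular matrix L + J/n, the vector
  z = D^(1/2) L^+ (e_s - e_t) solves NL z = x, and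

    r(s,t) = x \<bullet> z = \<Sum>_b (x \<bullet> b)^2 / \<mu>_b.

  The lazy walk (I + P)/2 is similar to I - NL/2 via D^(1/2), so summing the geometric
  series in each eigendirection gives

    r_L(s,t) = \<Sum>_b (x \<bullet> b)^2 / \<mu>_b * (1 - (1 - \<mu>_b/2)^(L+1)).

  All nonzero \<mu>_b lie in [\<lambda>_2, 2], so each error factor is at most
  (1 - \<lambda>_2/2)^(L+1) \<le> exp (-\<lambda>_2 L / 2), and this is \<le> \<epsilon> because \<lambda>_max \<ge> 1
  (the diagonal entries of NL are 1).
*)

section \<open>Scalar estimates\<close>

lemma approx_eps_weighted_sum:
  assumes "0 \<le> \<epsilon>" and "\<And>b. b \<in> B \<Longrightarrow> 0 \<le> w b"
    and "\<And>b. b \<in> B \<Longrightarrow> w b \<noteq> 0 \<Longrightarrow> 0 \<le> e b \<and> e b \<le> \<epsilon>"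
  shows "approx_eps \<epsilon> (\<Sum>b\<in>B. w b * (1 - e b)) (\<Sum>b\<in>B. w b)"
proof -
  have "(1 - \<epsilon>) * w b \<le> w b * (1 - e b) \<and> w b * (1 - e b) \<le> (1 + \<epsilon>) * w b" if "b \<in> B" for b
    using assms(2,3)[OF that] assms(1) mult_right_mono[of "e b" \<epsilon> "w b"]
    by (cases "w b = 0") (auto simp: algebra_simps)
  then show ?thesis
    unfolding approx_eps_def sum_distrib_left by (auto intro: sum_mono)
qed

lemma half_geometric_sum:
  fixes \<mu> :: real
  assumes "\<mu> \<noteq> 0"
  shows "(\<Sum>l\<in>{0..L}. (1 - \<mu> / 2) ^ l) / 2 = (1 - (1 - \<mu> / 2) ^ (L + 1)) / \<mu>"
proof -
  have "(\<Sum>l\<in>{0..L}. (1 - \<mu> / 2) ^ l) = ((1 - \<mu> / 2) ^ (L + 1) - 1) / ((1 - \<mu> / 2) - 1)"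
    using geometric_sum[of "1 - \<mu> / 2" "L + 1"] assms by (simp add: atLeast0AtMost lessThan_Suc_atMost)
  then show ?thesis
    using assms by (simp add: field_simps)
qed

lemma contraction_power_le_eps:
  fixes \<gamma> \<Lambda> n \<epsilon> :: real
  assumes "0 < \<gamma>" "\<gamma> \<le> 2" "1 \<le> \<Lambda>" "1 \<le> n" "0 < \<epsilon>" "\<epsilon> \<le> 1"
    and L: "real L \<ge> 2 * (\<Lambda> / \<gamma>) * ln (n / \<epsilon>)"
  shows "(1 - \<gamma> / 2) ^ (L + 1) \<le> \<epsilon>"
proof -
  have "0 \<le> ln (n / \<epsilon>)"
    using assms by simp
  have "ln (n / \<epsilon>) \<le> \<Lambda> * ln (n / \<epsilon>)"
    using \<open>1 \<le> \<Lambda>\<close> \<open>0 \<le> ln (n / \<epsilon>)\<close> by (simp add: mult_le_cancel_right1)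
  also have "\<dots> \<le> real L * (\<gamma> / 2)"
    using mult_right_mono[OF L, of "\<gamma> / 2"] \<open>0 < \<gamma>\<close> by (simp add: field_simps)
  finally have "ln (n / \<epsilon>) \<le> real L * (\<gamma> / 2)" .
  moreover have "- ln \<epsilon> \<le> ln (n / \<epsilon>)"
    using assms by (simp add: ln_div)
  ultimately have "- ln \<epsilon> \<le> real L * (\<gamma> / 2)"
    by linarith
  have "(1 - \<gamma> / 2) ^ (L + 1) \<le> (1 - \<gamma> / 2) ^ L"
    using assms by (intro power_decreasing) simp_all
  also have "\<dots> \<le> exp (- \<gamma> / 2) ^ L"
    using exp_ge_add_one_self[of "- \<gamma> / 2"] assms by (intro power_mono) simp_all
  also have "\<dots> = exp (- (real L * (\<gamma> / 2)))"
    by (simp add: exp_of_nat_mult[symmetric])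
  also have "\<dots> \<le> exp (ln \<epsilon>)"
    using \<open>- ln \<epsilon> \<le> real L * (\<gamma> / 2)\<close> by simp
  finally show ?thesis
    using \<open>0 < \<epsilon>\<close> by simp
qed

lemma quadratic_nonneg_imp_linear_coeff_zero:
  fixes a c :: real
  assumes "0 \<le> a" and nonneg: "\<And>t. 0 \<le> 2 * t * a + t\<^sup>2 * c"
  shows "a = 0"
proof (rule ccontr)
  assume "a \<noteq> 0"
  with assms(1) have "0 < a" by simp
  define k where "k = \<bar>c\<bar> + 1"
  have "0 < k" unfolding k_def by simp
  have "0 \<le> (2 * (- a / k) * a + (- a / k)\<^sup>2 * c) * k\<^sup>2"
    using nonneg zero_le_power2 by (rule mult_nonneg_nonneg)
  also have "\<dots> = a\<^sup>2 * (c - 2 * k)"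
    using \<open>0 < k\<close> by (simp add: field_simps power2_eq_square)
  finally have "0 \<le> c - 2 * k"
    using \<open>0 < a\<close> by (simp add: zero_le_mult_iff)
  then show False
    unfolding k_def by (simp add: abs_if split: if_splits)
qed

section \<open>Matrix algebra\<close>

lemma symmetric_matrix_inner_commute:
  fixes A :: "real^'n^'n"
  assumes "transpose A = A"
  shows "(A *v u) \<bullet> v = u \<bullet> (A *v v)"
  by (metis assms dot_lmul_matrix vector_transpose_matrix)

lemma sum_matrix_vector_mult:
  fixes M :: "'i \<Rightarrow> real^'n^'m"
  shows "(\<Sum>i\<in>I. M i) *v x = (\<Sum>i\<in>I. M i *v x)"
  by (induction I rule: infinite_finite_induct) (simp_all add: matrix_vector_mult_add_rdistrib)

lemma matrix_vector_mult_sum: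
  fixes A :: "real^'n^'m"
  shows "A *v (\<Sum>i\<in>I. f i) = (\<Sum>i\<in>I. A *v f i)"
  using linear_sum[OF matrix_vector_mul_linear, of A f I] by (simp add: o_def)

lemma matrix_diff_ldistrib: "(A :: real^'n^'m) ** (B - C) = A ** B - A ** C"
  by (vector matrix_matrix_mult_def sum_subtractf right_diff_distrib)

lemma matrix_diff_rdistrib: "((A :: real^'n^'m) - B) ** C = A ** C - B ** C"
  by (vector matrix_matrix_mult_def sum_subtractf left_diff_distrib)

lemma matrix_add_rdistrib: "((A :: real^'n^'m) + B) ** C = A ** C + B ** C"
  by (vector matrix_matrix_mult_def sum.distrib distrib_right)

lemma diag_mat_mult_vector: "diag_mat f *v x = (\<chi> i. f i * x $ i)"
  by (simp add: diag_mat_def matrix_vector_mult_def vec_eq_iff if_distrib if_distribR cong: if_cong)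

lemma transpose_diag_mat: "transpose (diag_mat f) = diag_mat f"
  by (simp add: diag_mat_def transpose_def vec_eq_iff)

lemma mpow_eigenvector:
  assumes "M *v v = c *\<^sub>R v"
  shows "mpow M l *v v = (c ^ l) *\<^sub>R v"
  by (induction l)
    (simp_all add: assms matrix_vector_mul_assoc[symmetric] matrix_vector_mult_scaleR)

lemma mpow_intertwining:
  assumes "M ** S = S ** R"
  shows "mpow M l ** S = S ** mpow R l"
proof (induction l)
  case (Suc l)
  have "mpow M (Suc l) ** S = M ** (S ** mpow R l)"
    by (simp flip: Suc add: matrix_mul_assoc)
  also have "\<dots> = S ** mpow R (Suc l)"
    by (simp add: matrix_mul_assoc assms)
  finally show ?case .
qed simp

lemma unitv_eq_axis: "unitv i = axis i 1"
  by (simp add: unitv_def axis_def vec_eq_iff)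

section \<open>Spectral theorem for real symmetric matrices\<close>

lemma rayleigh_minimizer_exists:
  fixes A :: "real^'n^'n"
  assumes "subspace U" and "U \<noteq> {0}"
  shows "\<exists>v\<in>U. norm v = 1 \<and> (\<forall>u\<in>U. (v \<bullet> (A *v v)) * (u \<bullet> u) \<le> u \<bullet> (A *v u))"
proof -
  let ?S = "U \<inter> sphere 0 1"
  have "compact ?S"
    using assms(1) by (intro closed_Int_compact closed_subspace compact_sphere)
  obtain w where "w \<in> U" "w \<noteq> 0"
    using assms subspace_0 by blast
  then have "(1 / norm w) *\<^sub>R w \<in> ?S"
    using assms(1) by (simp add: subspace_scale)
  then have "?S \<noteq> {}" by blast
  have "continuous_on ?S (\<lambda>u. u \<bullet> (A *v u))"
    by (intro continuous_intros linear_continuous_on bounded_linear_intros)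
  obtain v where v: "v \<in> ?S" and v_min: "\<And>y. y \<in> ?S \<Longrightarrow> v \<bullet> (A *v v) \<le> y \<bullet> (A *v y)"
    using continuous_attains_inf[OF \<open>compact ?S\<close> \<open>?S \<noteq> {}\<close> \<open>continuous_on ?S _\<close>] by blast
  have "(v \<bullet> (A *v v)) * (u \<bullet> u) \<le> u \<bullet> (A *v u)" if "u \<in> U" for u
  proof (cases "u = 0")
    case False
    have "(1 / norm u) *\<^sub>R u \<in> ?S"
      using that False assms(1) by (simp add: subspace_scale)
    then have "v \<bullet> (A *v v) \<le> (u \<bullet> (A *v u)) / (norm u)\<^sup>2"
      using v_min by (fastforce simp: matrix_vector_mult_scaleR power2_eq_square)
    then show ?thesis
      using False by (simp add: pos_le_divide_eq dot_square_norm)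
  qed simp
  with v show ?thesis
    by auto
qed

lemma rayleigh_minimizer_is_eigenvector:
  fixes A :: "real^'n^'n"
  assumes sym: "transpose A = A" and U: "subspace U" and inv: "\<And>u. u \<in> U \<Longrightarrow> A *v u \<in> U"
    and "v \<in> U" and "norm v = 1"
    and min: "\<And>u. u \<in> U \<Longrightarrow> (v \<bullet> (A *v v)) * (u \<bullet> u) \<le> u \<bullet> (A *v u)"
  shows "A *v v = (v \<bullet> (A *v v)) *\<^sub>R v"
proof -
  define \<mu> where "\<mu> = v \<bullet> (A *v v)"
  define r where "r = A *v v - \<mu> *\<^sub>R v"
  have "v \<bullet> v = 1"
    using \<open>norm v = 1\<close> by (simp add: dot_square_norm)
  have "r \<in> U"
    unfolding r_def using U inv \<open>v \<in> U\<close> by (simp add: subspace_diff subspace_scale)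
  have "v \<bullet> r = 0"
    unfolding r_def \<mu>_def using \<open>v \<bullet> v = 1\<close> by (simp add: inner_diff_right)
  have "v \<bullet> (A *v r) = r \<bullet> r"
    using symmetric_matrix_inner_commute[OF sym, of v r] \<open>v \<bullet> r = 0\<close>
    by (simp add: r_def inner_diff_left inner_commute)
  \<comment> \<open>Minimality along the curve \<open>v + t r\<close> forces the first-order term \<open>2 t (r \<bullet> r)\<close> to vanish.\<close>
  have "0 \<le> 2 * t * (r \<bullet> r) + t\<^sup>2 * (r \<bullet> (A *v r) - \<mu> * (r \<bullet> r))" for t
  proof -
    have "v + t *\<^sub>R r \<in> U"
      using U \<open>v \<in> U\<close> \<open>r \<in> U\<close> by (simp add: subspace_add subspace_scale)
    from min[OF this] show ?thesis
      using \<open>v \<bullet> v = 1\<close> \<open>v \<bullet> r = 0\<close> \<open>v \<bullet> (A *v r) = r \<bullet> r\<close>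
        symmetric_matrix_inner_commute[OF sym, of r v]
      by (simp add: \<mu>_def inner_commute power2_eq_square algebra_simps)
  qed
  then have "r \<bullet> r = 0"
    by (intro quadratic_nonneg_imp_linear_coeff_zero) simp_all
  then show ?thesis
    by (simp add: r_def \<mu>_def)
qed

lemma symmetric_matrix_invariant_subspace_eigen_expansion:
  fixes A :: "real^'n^'n"
  assumes sym: "transpose A = A"
  shows "subspace U \<Longrightarrow> (\<And>u. u \<in> U \<Longrightarrow> A *v u \<in> U) \<Longrightarrow>
    \<exists>B \<mu>. finite B \<and> B \<subseteq> U \<and> (\<forall>b\<in>B. norm b = 1 \<and> A *v b = \<mu> b *\<^sub>R b)
      \<and> (\<forall>x\<in>U. x = (\<Sum>b\<in>B. (x \<bullet> b) *\<^sub>R b))"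
proof (induction "dim U" arbitrary: U rule: less_induct)
  case less
  show ?case
  proof (cases "U = {0}")
    case True
    then show ?thesis
      by (intro exI[of _ "{}"]) auto
  next
    case False
    obtain v where "v \<in> U" "norm v = 1"
      and "\<forall>u\<in>U. (v \<bullet> (A *v v)) * (u \<bullet> u) \<le> u \<bullet> (A *v u)"
      using rayleigh_minimizer_exists[OF less.prems(1) False] by blast
    then have eig: "A *v v = (v \<bullet> (A *v v)) *\<^sub>R v"
      using rayleigh_minimizer_is_eigenvector[OF sym less.prems] by blast
    have "v \<bullet> v = 1"
      using \<open>norm v = 1\<close> by (simp add: dot_square_norm)
    define U' where "U' = U \<inter> {y. v \<bullet> y = 0}"
    have "subspace U'"
      unfolding U'_def by (intro subspace_inter less.prems) (auto simp: subspace_def inner_add_right)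
    have "A *v u \<in> U'" if "u \<in> U'" for u
    proof -
      have "v \<bullet> (A *v u) = (v \<bullet> (A *v v)) * (v \<bullet> u)"
        using symmetric_matrix_inner_commute[OF sym, of v u] by (metis eig inner_scaleR_left)
      then show ?thesis
        using that less.prems(2) unfolding U'_def by auto
    qed
    have "v \<notin> U'"
      unfolding U'_def using \<open>v \<bullet> v = 1\<close> by auto
    then have "U' \<subset> U"
      using \<open>v \<in> U\<close> unfolding U'_def by blast
    then have "dim U' < dim U"
      using \<open>subspace U'\<close> less.prems(1) by (metis dim_psubset span_eq_iff)
    then obtain B \<mu> where B: "finite B" "B \<subseteq> U'" "\<forall>b\<in>B. norm b = 1 \<and> A *v b = \<mu> b *\<^sub>R b"
      and expand: "\<forall>x\<in>U'. x = (\<Sum>b\<in>B. (x \<bullet> b) *\<^sub>R b)"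
      using less.hyps[OF _ \<open>subspace U'\<close>] \<open>\<And>u. u \<in> U' \<Longrightarrow> A *v u \<in> U'\<close> by blast
    have "v \<notin> B"
      using B(2) \<open>v \<notin> U'\<close> by blast
    have orth: "v \<bullet> b = 0" if "b \<in> B" for b
      using that B(2) unfolding U'_def by auto
    have "x = (\<Sum>b\<in>insert v B. (x \<bullet> b) *\<^sub>R b)" if "x \<in> U" for x
    proof -
      have "x - (x \<bullet> v) *\<^sub>R v \<in> U'"
        unfolding U'_def using that \<open>v \<in> U\<close> less.prems(1) \<open>v \<bullet> v = 1\<close>
        by (auto simp: subspace_diff subspace_scale inner_diff_right inner_commute)
      then have "x - (x \<bullet> v) *\<^sub>R v = (\<Sum>b\<in>B. ((x - (x \<bullet> v) *\<^sub>R v) \<bullet> b) *\<^sub>R b)"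
        using expand by blast
      also have "\<dots> = (\<Sum>b\<in>B. (x \<bullet> b) *\<^sub>R b)"
        by (intro sum.cong refl) (simp add: inner_diff_left orth)
      finally show ?thesis
        using B(1) \<open>v \<notin> B\<close> by (simp add: algebra_simps)
    qed
    then show ?thesis
      using B \<open>v \<in> U\<close> \<open>norm v = 1\<close> eig \<open>v \<notin> B\<close> unfolding U'_def
      by (intro exI[of _ "insert v B"] exI[of _ "\<mu>(v := v \<bullet> (A *v v))"]) auto
  qed
qed

text \<open>An orthonormal eigenbasis of a symmetric matrix, recorded only through the expansion
  \<open>x = (\<Sum>b\<in>B. (x \<bullet> b) *\<^sub>R b)\<close> that it implies.\<close>

locale eigenbasis =
  fixes A :: "real^'n::finite^'n" and B :: "(real^'n) set" and \<mu> :: "real^'n \<Rightarrow> real"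
  assumes symmetric: "transpose A = A"
    and finite_basis: "finite B"
    and norm_basis: "\<And>b. b \<in> B \<Longrightarrow> norm b = 1"
    and eigen: "\<And>b. b \<in> B \<Longrightarrow> A *v b = \<mu> b *\<^sub>R b"
    and expansion: "\<And>x. x = (\<Sum>b\<in>B. (x \<bullet> b) *\<^sub>R b)"

lemma symmetric_matrix_has_eigenbasis:
  fixes A :: "real^'n::finite^'n"
  assumes "transpose A = A"
  obtains B \<mu> where "eigenbasis A B \<mu>"
  using symmetric_matrix_invariant_subspace_eigen_expansion[OF assms, of UNIV]
  by (auto simp: eigenbasis_def assms)

context eigenbasis
begin

lemma inner_expansion: "x \<bullet> y = (\<Sum>b\<in>B. (x \<bullet> b) * (y \<bullet> b))"
  by (subst expansion[of y]) (simp add: inner_sum_right mult.commute)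

lemma inner_matrix_basis: "b \<in> B \<Longrightarrow> (A *v x) \<bullet> b = \<mu> b * (x \<bullet> b)"
  using symmetric_matrix_inner_commute[OF symmetric, of x b] by (simp add: eigen)

lemma eigenvalue_basis:
  assumes "b \<in> B" shows "\<mu> b \<in> eigenvalues A"
proof -
  have "b \<noteq> 0"
    using norm_basis[OF assms] by auto
  with eigen[OF assms] show ?thesis
    unfolding eigenvalues_def by blast
qed

lemma eigenvalues_subset: "eigenvalues A \<subseteq> \<mu> ` B"
proof
  fix c assume "c \<in> eigenvalues A"
  then obtain v where "v \<noteq> 0" and v: "A *v v = c *\<^sub>R v"
    unfolding eigenvalues_def by blast
  have "c \<noteq> \<mu> b \<Longrightarrow> v \<bullet> b = 0" if "b \<in> B" for b
    using inner_matrix_basis[OF that, of v] v by simp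
  then show "c \<in> \<mu> ` B"
    using \<open>v \<noteq> 0\<close> expansion[of v] by (metis (no_types, lifting) image_eqI scale_eq_0_iff sum.neutral)
qed

lemma finite_eigenvalues: "finite (eigenvalues A)"
  using finite_subset[OF eigenvalues_subset] finite_basis by blast

lemma quadratic_form_mpow: "x \<bullet> (mpow A l *v x) = (\<Sum>b\<in>B. (x \<bullet> b)\<^sup>2 * \<mu> b ^ l)"
proof -
  have "mpow A l *v x = (\<Sum>b\<in>B. (x \<bullet> b) *\<^sub>R (mpow A l *v b))"
    by (subst expansion[of x]) (simp add: matrix_vector_mult_sum matrix_vector_mult_scaleR)
  also have "\<dots> = (\<Sum>b\<in>B. ((x \<bullet> b) * \<mu> b ^ l) *\<^sub>R b)"
    by (intro sum.cong refl) (simp add: mpow_eigenvector[OF eigen])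
  finally show ?thesis
    by (simp add: inner_sum_right power2_eq_square mult_ac)
qed

lemma quadratic_form_expansion: "x \<bullet> (A *v x) = (\<Sum>b\<in>B. (x \<bullet> b)\<^sup>2 * \<mu> b)"
  using quadratic_form_mpow[of x 1] by simp

lemma quadratic_form_le_lambda_max: "x \<bullet> (A *v x) \<le> lambda_max A * (x \<bullet> x)"
proof -
  have "x \<bullet> (A *v x) = (\<Sum>b\<in>B. (x \<bullet> b)\<^sup>2 * \<mu> b)"
    by (rule quadratic_form_expansion)
  also have "\<dots> \<le> (\<Sum>b\<in>B. (x \<bullet> b)\<^sup>2 * lambda_max A)"
    unfolding lambda_max_def
    by (intro sum_mono mult_left_mono Max_ge finite_eigenvalues eigenvalue_basis) simp_all
  also have "\<dots> = lambda_max A * (x \<bullet> x)"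
    by (simp add: inner_expansion[of x x] sum_distrib_left power2_eq_square mult_ac)
  finally show ?thesis .
qed

lemma lambda_2_le: "b \<in> B \<Longrightarrow> \<mu> b \<noteq> 0 \<Longrightarrow> lambda_2 A \<le> \<mu> b"
  unfolding lambda_2_def using finite_eigenvalues eigenvalue_basis by (intro Min_le) auto

lemma lambda_2_in_nonzero_eigenvalues:
  assumes "x \<bullet> (A *v x) \<noteq> 0"
  shows "lambda_2 A \<in> eigenvalues A - {0}"
proof -
  have "\<exists>b\<in>B. \<mu> b \<noteq> 0"
  proof (rule ccontr)
    assume "\<not> (\<exists>b\<in>B. \<mu> b \<noteq> 0)"
    then have "x \<bullet> (A *v x) = 0"
      unfolding quadratic_form_expansion by simp
    with assms show False ..
  qed
  then have "eigenvalues A - {0} \<noteq> {}"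
    using eigenvalue_basis by blast
  then show ?thesis
    unfolding lambda_2_def using finite_eigenvalues by (intro Min_in) auto
qed

lemma inner_basis_eq_0_if_eigenvalue_0:
  "A *v z = x \<Longrightarrow> b \<in> B \<Longrightarrow> \<mu> b = 0 \<Longrightarrow> x \<bullet> b = 0"
  using inner_matrix_basis by force

text \<open>Terms with \<open>\<mu> b = 0\<close> vanish twice over: \<open>x \<bullet> b = 0\<close> there, and \<open>(x \<bullet> b)\<^sup>2 / 0 = 0\<close>
  in Isabelle. This is the spectral form of \<open>x \<bullet> A\<^sup>+ x\<close>.\<close>

lemma inner_solution_expansion:
  assumes "A *v z = x"
  shows "x \<bullet> z = (\<Sum>b\<in>B. (x \<bullet> b)\<^sup>2 / \<mu> b)"
  unfolding inner_expansion[of x z]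
proof (intro sum.cong refl)
  fix b assume "b \<in> B"
  then have "x \<bullet> b = \<mu> b * (z \<bullet> b)"
    using inner_matrix_basis assms by blast
  then show "(x \<bullet> b) * (z \<bullet> b) = (x \<bullet> b)\<^sup>2 / \<mu> b"
    by (cases "\<mu> b = 0") (simp_all add: power2_eq_square)
qed

lemma shift_eigenbasis: "eigenbasis (mat 1 - c *\<^sub>R A) B (\<lambda>b. 1 - c * \<mu> b)"
proof
  have "A $ j $ i = A $ i $ j" for i j
    using symmetric by (metis transpose_def vec_lambda_beta)
  then show "transpose (mat 1 - c *\<^sub>R A) = mat 1 - c *\<^sub>R A"
    by (simp add: transpose_def vec_eq_iff mat_def)
  show "(mat 1 - c *\<^sub>R A) *v b = (1 - c * \<mu> b) *\<^sub>R b" if "b \<in> B" for b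
    using eigen[OF that] by (simp add: algebra_simps scaleR_matrix_vector_assoc[symmetric])
qed (use finite_basis norm_basis expansion in auto)

lemma lazy_power_sum_quadratic_form:
  assumes "A *v z = x"
  shows "(\<Sum>l\<in>{0..L}. x \<bullet> (mpow (mat 1 - (1/2) *\<^sub>R A) l *v x)) / 2
    = (\<Sum>b\<in>B. (x \<bullet> b)\<^sup>2 / \<mu> b * (1 - (1 - \<mu> b / 2) ^ (L + 1)))"
proof -
  interpret lazy: eigenbasis "mat 1 - (1/2) *\<^sub>R A" B "\<lambda>b. 1 - (1/2) * \<mu> b"
    by (rule shift_eigenbasis)
  have "(\<Sum>l\<in>{0..L}. x \<bullet> (mpow (mat 1 - (1/2) *\<^sub>R A) l *v x)) / 2
      = (\<Sum>b\<in>B. (x \<bullet> b)\<^sup>2 * ((\<Sum>l\<in>{0..L}. (1 - \<mu> b / 2) ^ l) / 2))"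
    unfolding lazy.quadratic_form_mpow
    by (subst sum.swap) (simp add: sum_distrib_left sum_divide_distrib)
  also have "\<dots> = (\<Sum>b\<in>B. (x \<bullet> b)\<^sup>2 / \<mu> b * (1 - (1 - \<mu> b / 2) ^ (L + 1)))"
  proof (intro sum.cong refl)
    fix b assume "b \<in> B"
    show "(x \<bullet> b)\<^sup>2 * ((\<Sum>l\<in>{0..L}. (1 - \<mu> b / 2) ^ l) / 2)
        = (x \<bullet> b)\<^sup>2 / \<mu> b * (1 - (1 - \<mu> b / 2) ^ (L + 1))"
    proof (cases "\<mu> b = 0")
      case True
      then show ?thesis
        using inner_basis_eq_0_if_eigenvalue_0[OF assms \<open>b \<in> B\<close>] by simp
    next
      case False
      then show ?thesis
        by (simp only: half_geometric_sum[OF False] times_divide_eq_right times_divide_eq_left)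
    qed
  qed
  finally show ?thesis .
qed

end

section \<open>Moore-Penrose inverse\<close>

definition penrose_inverse :: "real^'n::finite^'n \<Rightarrow> real^'n^'n \<Rightarrow> bool" where
  "penrose_inverse A X \<longleftrightarrow> A ** X ** A = A \<and> X ** A ** X = X \<and>
     transpose (A ** X) = A ** X \<and> transpose (X ** A) = X ** A"

lemma penrose_inverse_unique:
  assumes X: "penrose_inverse A X" and Y: "penrose_inverse A Y"
  shows "X = Y"
proof -
  from X have X1: "A ** X ** A = A" and X2: "X ** A ** X = X"
    and X3: "transpose (A ** X) = A ** X" and X4: "transpose (X ** A) = X ** A"
    unfolding penrose_inverse_def by blast+
  from Y have Y1: "A ** Y ** A = A" and Y2: "Y ** A ** Y = Y"
    and Y3: "transpose (A ** Y) = A ** Y" and Y4: "transpose (Y ** A) = Y ** A"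
    unfolding penrose_inverse_def by blast+
  have "X = X ** transpose (A ** X)"
    using X2 X3 by (simp add: matrix_mul_assoc)
  also have "\<dots> = X ** transpose (A ** Y ** A ** X)"
    using Y1 by simp
  also have "\<dots> = X ** (A ** X) ** (A ** Y)"
    using X3 Y3 by (simp add: matrix_transpose_mul matrix_mul_assoc)
  also have "\<dots> = X ** A ** Y"
    using X2 by (simp add: matrix_mul_assoc)
  finally have XAY: "X = X ** A ** Y" .
  have "Y = transpose (Y ** A) ** Y"
    using Y2 Y4 by (simp add: matrix_mul_assoc)
  also have "\<dots> = transpose (Y ** A ** X ** A) ** Y"
    by (metis X1 matrix_mul_assoc)
  also have "\<dots> = (X ** A) ** (Y ** A) ** Y"
    using X4 Y4 by (simp add: matrix_transpose_mul matrix_mul_assoc)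
  also have "\<dots> = X ** A ** Y"
    by (metis Y2 matrix_mul_assoc)
  finally show ?thesis
    using XAY by simp
qed

lemma pinv_eqI: "penrose_inverse A X \<Longrightarrow> pinv A = X"
  unfolding pinv_def penrose_inverse_def[symmetric]
  using penrose_inverse_unique by blast

section \<open>Graph Laplacians\<close>

lemma degree_pos:
  fixes E :: "'n::finite \<Rightarrow> 'n \<Rightarrow> bool"
  assumes "connected_graph E" and "CARD('n) \<ge> 2"
  shows "degree E u > 0"
proof -
  have "\<not> (\<forall>a b :: 'n. a = b)"
    using assms(2) card_le_Suc0_iff_eq[of "UNIV :: 'n set"] by auto
  then obtain v :: 'n where "v \<noteq> u"
    by (metis (full_types))
  have "E\<^sup>*\<^sup>* u v"
    using assms(1) unfolding connected_graph_def by blast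
  then obtain y where "E u y"
    using \<open>v \<noteq> u\<close> by (cases rule: converse_rtranclpE) auto
  then show ?thesis
    unfolding degree_def by (auto simp: card_gt_0_iff)
qed

lemma degree_nonneg: "0 \<le> degree E u"
  by (simp add: degree_def)

lemma degree_eq_sum: "degree E i = (\<Sum>j\<in>UNIV. of_bool (E i j))"
  by (simp add: degree_def sum.If_cases)

lemma deg_mat_quadratic_form:
  "u \<bullet> (deg_mat E *v u) = (\<Sum>i\<in>UNIV. \<Sum>j\<in>UNIV. of_bool (E i j) * (u $ i)\<^sup>2)"
proof -
  have "u \<bullet> (deg_mat E *v u) = (\<Sum>i\<in>UNIV. degree E i * (u $ i)\<^sup>2)"
    by (simp add: deg_mat_def diag_mat_mult_vector inner_vec_def power2_eq_square mult_ac)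
  then show ?thesis
    by (simp only: degree_eq_sum sum_distrib_right)
qed

lemma adj_mat_quadratic_form:
  "u \<bullet> (adj_mat E *v u) = (\<Sum>i\<in>UNIV. \<Sum>j\<in>UNIV. of_bool (E i j) * (u $ i * u $ j))"
  by (simp add: adj_mat_def matrix_vector_mult_def inner_vec_def sum_distrib_left mult_ac
      of_bool_def)

lemma lap_mat_quadratic_form:
  assumes "simple_graph E"
  shows "2 * (u \<bullet> (lap_mat E *v u)) = (\<Sum>i\<in>UNIV. \<Sum>j\<in>UNIV. of_bool (E i j) * (u $ i - u $ j)\<^sup>2)"
    and "2 * (u \<bullet> (deg_mat E *v u) + u \<bullet> (adj_mat E *v u))
      = (\<Sum>i\<in>UNIV. \<Sum>j\<in>UNIV. of_bool (E i j) * (u $ i + u $ j)\<^sup>2)"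
proof -
  have "E i j = E j i" for i j
    using assms unfolding simple_graph_def by blast
  then have "(\<Sum>i\<in>UNIV. \<Sum>j\<in>UNIV. of_bool (E i j) * (u $ j)\<^sup>2)
      = (\<Sum>i\<in>UNIV. \<Sum>j\<in>UNIV. of_bool (E i j) * (u $ i)\<^sup>2 :: real)"
    by (subst sum.swap) simp
  then have sq: "(\<Sum>i\<in>UNIV. \<Sum>j\<in>UNIV. of_bool (E i j) * ((u $ i)\<^sup>2 + (u $ j)\<^sup>2))
      = 2 * (u \<bullet> (deg_mat E *v u))"
    unfolding deg_mat_quadratic_form by (simp add: distrib_left sum.distrib)
  have "(\<Sum>i\<in>UNIV. \<Sum>j\<in>UNIV. of_bool (E i j) * (u $ i - u $ j)\<^sup>2) =
      (\<Sum>i\<in>UNIV. \<Sum>j\<in>UNIV. of_bool (E i j) * ((u $ i)\<^sup>2 + (u $ j)\<^sup>2))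
      - 2 * (\<Sum>i\<in>UNIV. \<Sum>j\<in>UNIV. of_bool (E i j) * (u $ i * u $ j))"
    by (simp add: power2_diff algebra_simps sum_subtractf sum_distrib_left)
  then show "2 * (u \<bullet> (lap_mat E *v u)) = (\<Sum>i\<in>UNIV. \<Sum>j\<in>UNIV. of_bool (E i j) * (u $ i - u $ j)\<^sup>2)"
    unfolding sq lap_mat_def adj_mat_quadratic_form[symmetric]
    by (simp add: matrix_vector_mult_diff_rdistrib inner_diff_right)
  have "(\<Sum>i\<in>UNIV. \<Sum>j\<in>UNIV. of_bool (E i j) * (u $ i + u $ j)\<^sup>2) =
      (\<Sum>i\<in>UNIV. \<Sum>j\<in>UNIV. of_bool (E i j) * ((u $ i)\<^sup>2 + (u $ j)\<^sup>2))
      + 2 * (\<Sum>i\<in>UNIV. \<Sum>j\<in>UNIV. of_bool (E i j) * (u $ i * u $ j))"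
    by (simp add: power2_sum algebra_simps sum.distrib sum_distrib_left)
  then show "2 * (u \<bullet> (deg_mat E *v u) + u \<bullet> (adj_mat E *v u))
      = (\<Sum>i\<in>UNIV. \<Sum>j\<in>UNIV. of_bool (E i j) * (u $ i + u $ j)\<^sup>2)"
    unfolding sq adj_mat_quadratic_form[symmetric] by simp
qed

lemma lap_mat_psd:
  assumes "simple_graph E"
  shows "0 \<le> u \<bullet> (lap_mat E *v u)"
proof -
  have "0 \<le> 2 * (u \<bullet> (lap_mat E *v u))"
    unfolding lap_mat_quadratic_form(1)[OF assms] by (intro sum_nonneg) simp
  then show ?thesis
    by simp
qed

lemma lap_mat_symmetric: "simple_graph E \<Longrightarrow> transpose (lap_mat E) = lap_mat E"
  unfolding simple_graph_def
  by (simp add: transpose_def vec_eq_iff lap_mat_def deg_mat_def diag_mat_def adj_mat_def)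

lemma lap_mat_row_sum: "(\<Sum>j\<in>UNIV. lap_mat E $ i $ j) = 0"
  by (simp add: lap_mat_def deg_mat_def diag_mat_def adj_mat_def sum_subtractf degree_def
      sum.If_cases)

lemma lap_mat_quadratic_form_eq_0_imp_constant:
  assumes "simple_graph E" and "connected_graph E" and "u \<bullet> (lap_mat E *v u) = 0"
  shows "u $ i = u $ j"
proof -
  have "(\<Sum>i\<in>UNIV. \<Sum>j\<in>UNIV. of_bool (E i j) * (u $ i - u $ j)\<^sup>2) = (0::real)"
    using lap_mat_quadratic_form(1)[OF assms(1), of u] assms(3) by simp
  then have "of_bool (E x y) * (u $ x - u $ y)\<^sup>2 = (0::real)" for x y
    by (simp add: sum_nonneg_eq_0_iff sum_nonneg)
  then have edge: "E x y \<Longrightarrow> u $ x = u $ y" for x y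
    by simp
  have "E\<^sup>*\<^sup>* i j"
    using assms(2) unfolding connected_graph_def by blast
  then show ?thesis
    by (induction rule: rtranclp_induct) (simp_all add: edge)
qed

definition sqrt_deg_mat :: "('n::finite \<Rightarrow> 'n \<Rightarrow> bool) \<Rightarrow> real^'n^'n" where
  "sqrt_deg_mat E = diag_mat (\<lambda>u. sqrt (degree E u))"

definition inv_sqrt_deg_mat :: "('n::finite \<Rightarrow> 'n \<Rightarrow> bool) \<Rightarrow> real^'n^'n" where
  "inv_sqrt_deg_mat E = diag_mat (\<lambda>u. 1 / sqrt (degree E u))"

lemma norm_lap_eq: "norm_lap E = inv_sqrt_deg_mat E ** lap_mat E ** inv_sqrt_deg_mat E"
  unfolding norm_lap_def inv_sqrt_deg_mat_def ..

lemma inv_sqrt_deg_mat_inner_commute: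
  "(inv_sqrt_deg_mat E *v x) \<bullet> y = x \<bullet> (inv_sqrt_deg_mat E *v y)"
  unfolding inv_sqrt_deg_mat_def by (rule symmetric_matrix_inner_commute[OF transpose_diag_mat])

lemma sqrt_deg_mat_inverse:
  assumes "\<And>u. degree E u > 0"
  shows "sqrt_deg_mat E *v (inv_sqrt_deg_mat E *v x) = x"
    and "inv_sqrt_deg_mat E *v (sqrt_deg_mat E *v x) = x"
  using assms[THEN less_imp_neq, THEN not_sym]
  by (simp_all add: sqrt_deg_mat_def inv_sqrt_deg_mat_def diag_mat_mult_vector vec_eq_iff)

lemma inv_deg_mult_sqrt_deg_mat:
  "diag_mat (\<lambda>u. 1 / degree E u) *v (sqrt_deg_mat E *v x) = inv_sqrt_deg_mat E *v x"
proof -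
  have "1 / d * (sqrt d * y) = 1 / sqrt d * y" if "0 \<le> d" for d y :: real
    using that real_div_sqrt[OF that] by (cases "d = 0") (simp_all add: field_simps)
  then show ?thesis
    unfolding sqrt_deg_mat_def inv_sqrt_deg_mat_def diag_mat_mult_vector vec_eq_iff
    by (simp only: vec_lambda_beta degree_nonneg simp_thms)
qed

lemma deg_mult_inv_sqrt_deg_mat: "deg_mat E *v (inv_sqrt_deg_mat E *v x) = sqrt_deg_mat E *v x"
proof -
  have "d * (1 / sqrt d * y) = sqrt d * y" if "0 \<le> d" for d y :: real
    using real_div_sqrt[OF that] by (metis mult.commute times_divide_eq_right mult_1_right)
  then show ?thesis
    unfolding deg_mat_def sqrt_deg_mat_def inv_sqrt_deg_mat_def diag_mat_mult_vector vec_eq_iff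
    by (simp only: vec_lambda_beta degree_nonneg simp_thms)
qed

lemma norm_lap_symmetric:
  assumes "simple_graph E"
  shows "transpose (norm_lap E) = norm_lap E"
  by (simp add: norm_lap_eq inv_sqrt_deg_mat_def matrix_transpose_mul transpose_diag_mat
      lap_mat_symmetric[OF assms] matrix_mul_assoc)

lemma norm_lap_quadratic_form:
  "v \<bullet> (norm_lap E *v v) = (inv_sqrt_deg_mat E *v v) \<bullet> (lap_mat E *v (inv_sqrt_deg_mat E *v v))"
  by (simp add: norm_lap_eq matrix_vector_mul_assoc[symmetric] inv_sqrt_deg_mat_inner_commute)

lemma norm_lap_quadratic_form_le:
  assumes "simple_graph E" and "\<And>u. degree E u > 0"
  shows "v \<bullet> (norm_lap E *v v) \<le> 2 * (v \<bullet> v)"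
proof -
  define u where "u = inv_sqrt_deg_mat E *v v"
  have "v \<bullet> v = u \<bullet> (deg_mat E *v u)"
    by (simp add: u_def deg_mult_inv_sqrt_deg_mat inv_sqrt_deg_mat_inner_commute
        sqrt_deg_mat_inverse(2)[OF assms(2)])
  moreover have "0 \<le> 2 * (u \<bullet> (deg_mat E *v u) + u \<bullet> (adj_mat E *v u))"
    unfolding lap_mat_quadratic_form(2)[OF assms(1)] by (intro sum_nonneg) simp
  ultimately show ?thesis
    by (simp add: norm_lap_quadratic_form u_def[symmetric] lap_mat_def
        matrix_vector_mult_diff_rdistrib inner_diff_right)
qed

lemma norm_lap_eigenvalue_bounds:
  assumes "simple_graph E" and "\<And>u. degree E u > 0" and "c \<in> eigenvalues (norm_lap E)"
  shows "0 \<le> c" and "c \<le> 2"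
proof -
  obtain v where "v \<noteq> 0" and v: "norm_lap E *v v = c *\<^sub>R v"
    using assms(3) unfolding eigenvalues_def by blast
  then have "0 < v \<bullet> v" and quad: "v \<bullet> (norm_lap E *v v) = c * (v \<bullet> v)"
    by simp_all
  have "0 \<le> c * (v \<bullet> v)"
    unfolding quad[symmetric] norm_lap_quadratic_form using lap_mat_psd[OF assms(1)] .
  then show "0 \<le> c"
    using \<open>0 < v \<bullet> v\<close> zero_le_mult_iff[of c "v \<bullet> v"] by linarith
  have "c * (v \<bullet> v) \<le> 2 * (v \<bullet> v)"
    unfolding quad[symmetric] using norm_lap_quadratic_form_le[OF assms(1,2)] .
  then show "c \<le> 2"
    using \<open>0 < v \<bullet> v\<close> by (simp only: mult_le_cancel_right_pos)
qed

lemma norm_lap_diagonal: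
  assumes "simple_graph E" and "\<And>u. degree E u > 0"
  shows "unitv i \<bullet> (norm_lap E *v unitv i) = 1"
proof -
  have "inv_sqrt_deg_mat E *v unitv i = (1 / sqrt (degree E i)) *\<^sub>R unitv i"
    by (simp add: inv_sqrt_deg_mat_def diag_mat_mult_vector unitv_def vec_eq_iff)
  moreover have "unitv i \<bullet> (lap_mat E *v unitv i) = degree E i"
    using assms(1) unfolding simple_graph_def
    by (simp add: unitv_eq_axis matrix_vector_mult_basis inner_axis' column_def
        lap_mat_def deg_mat_def diag_mat_def adj_mat_def)
  ultimately show ?thesis
    using assms(2)[of i] by (simp add: norm_lap_quadratic_form matrix_vector_mult_scaleR)
qed

definition ones_mat :: "real^'n::finite^'n" where
  "ones_mat = (\<chi> i j. 1)"

lemma ones_mat_mult_vector: "ones_mat *v v = (\<chi> i. \<Sum>j\<in>UNIV. v $ j)"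
  by (simp add: ones_mat_def matrix_vector_mult_def)

lemma transpose_ones_mat: "transpose ones_mat = ones_mat"
  by (simp add: ones_mat_def transpose_def)

lemma ones_mat_squared: "ones_mat ** ones_mat = real CARD('n) *\<^sub>R (ones_mat :: real^'n::finite^'n)"
  by (simp add: ones_mat_def matrix_matrix_mult_def vec_eq_iff)

lemma lap_mat_mult_ones_mat: "lap_mat E ** ones_mat = 0"
  by (simp add: ones_mat_def matrix_matrix_mult_def vec_eq_iff lap_mat_row_sum)

lemma ones_mat_mult_lap_mat: "simple_graph E \<Longrightarrow> ones_mat ** lap_mat E = 0"
  by (metis lap_mat_mult_ones_mat lap_mat_symmetric matrix_transpose_mul transpose_ones_mat
      transpose_mat mat_0)

lemma lap_mat_plus_ones_mat_injective:
  fixes E :: "'n::finite \<Rightarrow> 'n \<Rightarrow> bool"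
  assumes "simple_graph E" and "connected_graph E"
    and "(lap_mat E + (1 / real CARD('n)) *\<^sub>R ones_mat) *v v = 0"
  shows "v = 0"
proof -
  have "0 = v \<bullet> ((lap_mat E + (1 / real CARD('n)) *\<^sub>R ones_mat) *v v)"
    using assms(3) by simp
  also have "\<dots> = v \<bullet> (lap_mat E *v v) + (\<Sum>j\<in>UNIV. v $ j)\<^sup>2 / real CARD('n)"
    by (simp add: algebra_simps ones_mat_mult_vector inner_vec_def power2_eq_square
        sum_distrib_left sum_divide_distrib sum.distrib scaleR_matrix_vector_assoc[symmetric])
  finally have "v \<bullet> (lap_mat E *v v) + (\<Sum>j\<in>UNIV. v $ j)\<^sup>2 / real CARD('n) = 0"
    by simp
  moreover have "0 \<le> v \<bullet> (lap_mat E *v v)" and "0 \<le> (\<Sum>j\<in>UNIV. v $ j)\<^sup>2 / real CARD('n)"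
    using lap_mat_psd[OF assms(1)] by simp_all
  ultimately have "v \<bullet> (lap_mat E *v v) = 0" and "(\<Sum>j\<in>UNIV. v $ j)\<^sup>2 / real CARD('n) = 0"
    by linarith+
  then have "v $ j = v $ i" and "(\<Sum>j\<in>UNIV. v $ j) = 0" for i j
    using lap_mat_quadratic_form_eq_0_imp_constant[OF assms(1,2)] by simp_all
  then have "(\<Sum>j\<in>(UNIV :: 'n set). v $ i) = 0" for i
    by (metis (no_types) sum.cong)
  then show ?thesis
    by (simp add: vec_eq_iff)
qed

lemma lap_mat_mult_pinv:
  fixes E :: "'n::finite \<Rightarrow> 'n \<Rightarrow> bool"
  assumes sg: "simple_graph E" and "connected_graph E"
  shows "lap_mat E ** pinv (lap_mat E) = mat 1 - (1 / real CARD('n)) *\<^sub>R ones_mat"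
proof -
  let ?J = "ones_mat :: real^'n^'n" and ?L = "lap_mat E" and ?c = "1 / real CARD('n)"
  define M where "M = ?L + ?c *\<^sub>R ?J"
  obtain M' where M'M: "M' ** M = mat 1"
    using lap_mat_plus_ones_mat_injective[OF assms] matrix_left_invertible_ker[of M]
    unfolding M_def by blast
  then have MM': "M ** M' = mat 1"
    using matrix_left_right_inverse by blast
  have "M ** ?J = ?J" and "?J ** M = ?J"
    by (simp_all add: M_def matrix_add_rdistrib matrix_add_ldistrib lap_mat_mult_ones_mat
        ones_mat_mult_lap_mat[OF sg] ones_mat_squared matrix_scalar_ac
        scalar_matrix_assoc[symmetric])
  then have "M' ** ?J = ?J" and "?J ** M' = ?J"
    by (metis M'M matrix_mul_assoc matrix_mul_lid, metis MM' matrix_mul_assoc matrix_mul_rid)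
  \<comment> \<open>\<open>M\<close> agrees with \<open>L\<close> off the constants, so its inverse corrected on the constants is \<open>L\<^sup>+\<close>.\<close>
  define X where "X = M' - ?c *\<^sub>R ?J"
  define P where "P = mat 1 - ?c *\<^sub>R ?J"
  have L_eq: "?L = M - ?c *\<^sub>R ?J"
    by (simp add: M_def)
  have "?c *\<^sub>R (?J ** ?J) = ?J"
    by (simp add: ones_mat_squared)
  then have "?J ** X = 0"
    using \<open>?J ** M' = ?J\<close>
    by (simp add: X_def matrix_diff_ldistrib matrix_scalar_ac scalar_matrix_assoc[symmetric])
  have LX: "?L ** X = P"
  proof -
    have "?L ** X = ?L ** M'"
      by (simp add: X_def matrix_diff_ldistrib matrix_scalar_ac scalar_matrix_assoc[symmetric]
          lap_mat_mult_ones_mat)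
    also have "\<dots> = P"
      using MM' \<open>?J ** M' = ?J\<close>
      by (simp add: L_eq P_def matrix_diff_rdistrib scalar_matrix_assoc[symmetric])
    finally show ?thesis .
  qed
  have XL: "X ** ?L = P"
  proof -
    have "X ** ?L = M' ** ?L"
      by (simp add: X_def matrix_diff_rdistrib scalar_matrix_assoc[symmetric]
          ones_mat_mult_lap_mat[OF sg])
    also have "\<dots> = P"
      using M'M \<open>M' ** ?J = ?J\<close>
      by (simp add: L_eq P_def matrix_diff_ldistrib matrix_scalar_ac scalar_matrix_assoc[symmetric])
    finally show ?thesis .
  qed
  have "transpose P = P"
    by (simp add: P_def ones_mat_def transpose_def vec_eq_iff mat_def)
  moreover have "P ** ?L = ?L" and "P ** X = X"
    using \<open>?J ** X = 0\<close>
    by (simp_all add: P_def matrix_diff_rdistrib scalar_matrix_assoc[symmetric]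
        ones_mat_mult_lap_mat[OF sg])
  ultimately have "penrose_inverse ?L X"
    unfolding penrose_inverse_def using LX XL by (simp add: matrix_mul_assoc[symmetric])
  then show ?thesis
    using LX by (simp add: pinv_eqI P_def)
qed

section \<open>Effective resistances in the eigenbasis of the normalized Laplacian\<close>

lemma lazy_walk_mat_intertwines_norm_lap:
  assumes "\<And>u. degree E u > 0"
  shows "((1/2) *\<^sub>R mat 1 + (1/2) *\<^sub>R walk_mat E) ** sqrt_deg_mat E
    = sqrt_deg_mat E ** (mat 1 - (1/2) *\<^sub>R norm_lap E)"
proof -
  have walk: "walk_mat E *v (sqrt_deg_mat E *v x) = adj_mat E *v (inv_sqrt_deg_mat E *v x)" for x
    by (simp add: walk_mat_def matrix_vector_mul_assoc[symmetric] inv_deg_mult_sqrt_deg_mat)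
  have sqrt_deg_norm_lap: "sqrt_deg_mat E *v (norm_lap E *v x)
      = sqrt_deg_mat E *v x - adj_mat E *v (inv_sqrt_deg_mat E *v x)" for x
    by (simp add: norm_lap_eq matrix_vector_mul_assoc[symmetric] sqrt_deg_mat_inverse(1)[OF assms]
        lap_mat_def matrix_vector_mult_diff_rdistrib deg_mult_inv_sqrt_deg_mat)
  show ?thesis
    unfolding matrix_eq
  proof
    fix x
    have "(((1/2) *\<^sub>R mat 1 + (1/2) *\<^sub>R walk_mat E) ** sqrt_deg_mat E) *v x
        = (1/2) *\<^sub>R (sqrt_deg_mat E *v x) + (1/2) *\<^sub>R (adj_mat E *v (inv_sqrt_deg_mat E *v x))"
      by (simp add: matrix_vector_mul_assoc[symmetric] matrix_vector_mult_add_rdistrib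
          scaleR_matrix_vector_assoc[symmetric] walk)
    also have "\<dots> = (sqrt_deg_mat E ** (mat 1 - (1/2) *\<^sub>R norm_lap E)) *v x"
      by (simp add: matrix_vector_mul_assoc[symmetric] scaleR_matrix_vector_assoc[symmetric]
          sqrt_deg_norm_lap algebra_simps)
    finally show "(((1/2) *\<^sub>R mat 1 + (1/2) *\<^sub>R walk_mat E) ** sqrt_deg_mat E) *v x
        = (sqrt_deg_mat E ** (mat 1 - (1/2) *\<^sub>R norm_lap E)) *v x" .
  qed
qed

lemma trunc_eff_res_eq_quadratic_forms:
  fixes E :: "'n::finite \<Rightarrow> 'n \<Rightarrow> bool" and s t :: 'n
  assumes "\<And>u. degree E u > 0"
  defines "x \<equiv> inv_sqrt_deg_mat E *v (unitv s - unitv t)"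
  shows "trunc_eff_res E L s t
    = (\<Sum>l\<in>{0..L}. x \<bullet> (mpow (mat 1 - (1/2) *\<^sub>R norm_lap E) l *v x)) / 2"
proof -
  let ?Q = "(1/2) *\<^sub>R mat 1 + (1/2) *\<^sub>R walk_mat E" and ?R = "mat 1 - (1/2) *\<^sub>R norm_lap E"
  have w: "unitv s - unitv t = sqrt_deg_mat E *v x"
    unfolding x_def sqrt_deg_mat_inverse(1)[OF assms(1)] ..
  have "diag_mat (\<lambda>u. 1 / degree E u) *v (mpow ?Q l *v (unitv s - unitv t))
      = inv_sqrt_deg_mat E *v (mpow ?R l *v x)" for l
    unfolding w matrix_vector_mul_assoc
    by (simp add: mpow_intertwining[OF lazy_walk_mat_intertwines_norm_lap[OF assms(1)]]
        matrix_vector_mul_assoc[symmetric] inv_deg_mult_sqrt_deg_mat)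
  then show ?thesis
    unfolding trunc_eff_res_def Let_def
    by (simp add: sum_matrix_vector_mult matrix_vector_mul_assoc[symmetric] matrix_vector_mult_sum
        inner_sum_right inv_sqrt_deg_mat_inner_commute[symmetric] x_def[symmetric]
        sum_divide_distrib)
qed

lemma eff_res_eq_inner_norm_lap_solution:
  fixes E :: "'n::finite \<Rightarrow> 'n \<Rightarrow> bool" and s t :: 'n
  assumes "simple_graph E" and "connected_graph E" and "\<And>u. degree E u > 0"
  defines "x \<equiv> inv_sqrt_deg_mat E *v (unitv s - unitv t)"
  obtains z where "norm_lap E *v z = x" and "eff_res E s t = x \<bullet> z"
proof
  let ?w = "unitv s - unitv t" and ?y = "pinv (lap_mat E) *v (unitv s - unitv t)"
  have "ones_mat *v ?w = 0"
    by (simp add: ones_mat_mult_vector unitv_def sum_subtractf vec_eq_iff)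
  then have "lap_mat E *v ?y = ?w"
    by (simp add: matrix_vector_mul_assoc lap_mat_mult_pinv[OF assms(1,2)]
        matrix_vector_mult_diff_rdistrib scaleR_matrix_vector_assoc[symmetric])
  then show "norm_lap E *v (sqrt_deg_mat E *v ?y) = x"
    by (simp add: x_def norm_lap_eq matrix_vector_mul_assoc[symmetric] sqrt_deg_mat_inverse(2)[OF assms(3)])
  show "eff_res E s t = x \<bullet> (sqrt_deg_mat E *v ?y)"
    by (simp add: eff_res_def Let_def x_def inv_sqrt_deg_mat_inner_commute sqrt_deg_mat_inverse(2)[OF assms(3)])
qed

lemma norm_lap_spectrum_bounds:
  fixes E :: "'n::finite \<Rightarrow> 'n \<Rightarrow> bool"
  assumes "simple_graph E" and "\<And>u. degree E u > 0" and "eigenbasis (norm_lap E) B \<mu>"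
  shows "0 < lambda_2 (norm_lap E)" and "lambda_2 (norm_lap E) \<le> 2"
    and "1 \<le> lambda_max (norm_lap E)"
proof -
  obtain i :: 'n where True
    by blast
  have "unitv i \<bullet> (norm_lap E *v unitv i) = 1" and "unitv i \<bullet> unitv i = 1"
    using norm_lap_diagonal[OF assms(1,2)] by (simp_all add: unitv_eq_axis inner_axis_axis)
  then have "lambda_2 (norm_lap E) \<in> eigenvalues (norm_lap E) - {0}"
    and "1 \<le> lambda_max (norm_lap E)"
    using eigenbasis.lambda_2_in_nonzero_eigenvalues[OF assms(3), of "unitv i"]
      eigenbasis.quadratic_form_le_lambda_max[OF assms(3), of "unitv i"] by simp_all
  with norm_lap_eigenvalue_bounds[OF assms(1,2)]
  show "0 < lambda_2 (norm_lap E)" and "lambda_2 (norm_lap E) \<le> 2"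
    and "1 \<le> lambda_max (norm_lap E)"
    by (auto simp: less_le)
qed

lemma resistances_spectral_forms:
  fixes E :: "'n::finite \<Rightarrow> 'n \<Rightarrow> bool" and s t :: 'n
  assumes "simple_graph E" and "connected_graph E" and "\<And>u. degree E u > 0"
    and "eigenbasis (norm_lap E) B \<mu>"
  defines "x \<equiv> inv_sqrt_deg_mat E *v (unitv s - unitv t)"
  shows "eff_res E s t = (\<Sum>b\<in>B. (x \<bullet> b)\<^sup>2 / \<mu> b)"
    and "trunc_eff_res E L s t = (\<Sum>b\<in>B. (x \<bullet> b)\<^sup>2 / \<mu> b * (1 - (1 - \<mu> b / 2) ^ (L + 1)))"
proof -
  interpret eigenbasis "norm_lap E" B \<mu>
    by (rule assms(4))
  obtain z where z: "norm_lap E *v z = x" and "eff_res E s t = x \<bullet> z"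
    using eff_res_eq_inner_norm_lap_solution[OF assms(1-3)] unfolding x_def .
  then show "eff_res E s t = (\<Sum>b\<in>B. (x \<bullet> b)\<^sup>2 / \<mu> b)"
    using inner_solution_expansion by simp
  have "trunc_eff_res E L s t
      = (\<Sum>l\<in>{0..L}. x \<bullet> (mpow (mat 1 - (1/2) *\<^sub>R norm_lap E) l *v x)) / 2"
    unfolding x_def by (rule trunc_eff_res_eq_quadratic_forms[OF assms(3)])
  also have "\<dots> = (\<Sum>b\<in>B. (x \<bullet> b)\<^sup>2 / \<mu> b * (1 - (1 - \<mu> b / 2) ^ (L + 1)))"
    by (rule lazy_power_sum_quadratic_form[OF z])
  finally show "trunc_eff_res E L s t
      = (\<Sum>b\<in>B. (x \<bullet> b)\<^sup>2 / \<mu> b * (1 - (1 - \<mu> b / 2) ^ (L + 1)))" .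
qed

lemma norm_lap_error_factor_bounds:
  assumes "simple_graph E" and "\<And>u. degree E u > 0" and "eigenbasis (norm_lap E) B \<mu>"
    and "b \<in> B" and "\<mu> b \<noteq> 0"
  shows "0 \<le> (1 - \<mu> b / 2) ^ k" and "(1 - \<mu> b / 2) ^ k \<le> (1 - lambda_2 (norm_lap E) / 2) ^ k"
proof -
  have "\<mu> b \<in> eigenvalues (norm_lap E)"
    using eigenbasis.eigenvalue_basis[OF assms(3,4)] .
  then have "lambda_2 (norm_lap E) \<le> \<mu> b" and "\<mu> b \<le> 2"
    using eigenbasis.lambda_2_le[OF assms(3-5)] norm_lap_eigenvalue_bounds(2)[OF assms(1,2)]
    by auto
  then show "0 \<le> (1 - \<mu> b / 2) ^ k" and "(1 - \<mu> b / 2) ^ k \<le> (1 - lambda_2 (norm_lap E) / 2) ^ k"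
    by (simp_all add: power_mono)
qed

theorem lemma3p2:
  fixes E :: "'n::finite \<Rightarrow> 'n \<Rightarrow> bool" and s t :: 'n and \<epsilon> :: real and L :: nat
  assumes "simple_graph E" and "connected_graph E" and "CARD('n) \<ge> 2"
    and "s \<noteq> t" and "0 < \<epsilon>" and "\<epsilon> < 1"
    and "real L \<ge> 2 * cond_num (norm_lap E) * ln (real CARD('n) / \<epsilon>)"
  shows "approx_eps \<epsilon> (trunc_eff_res E L s t) (eff_res E s t)"
proof -
  have deg: "\<And>u. degree E u > 0"
    using degree_pos[OF assms(2,3)] .
  obtain B \<mu> where eb: "eigenbasis (norm_lap E) B \<mu>"
    using symmetric_matrix_has_eigenbasis[OF norm_lap_symmetric[OF assms(1)]] .
  have gap: "(1 - lambda_2 (norm_lap E) / 2) ^ (L + 1) \<le> \<epsilon>"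
    using contraction_power_le_eps[OF norm_lap_spectrum_bounds[OF assms(1) deg eb] _ _ _
        assms(7)[unfolded cond_num_def]] assms(3,5,6)
    by simp
  show ?thesis
    unfolding resistances_spectral_forms[OF assms(1,2) deg eb]
  proof (rule approx_eps_weighted_sum)
    fix b assume "b \<in> B"
    then show "0 \<le> ((inv_sqrt_deg_mat E *v (unitv s - unitv t)) \<bullet> b)\<^sup>2 / \<mu> b"
      using norm_lap_eigenvalue_bounds(1)[OF assms(1) deg eigenbasis.eigenvalue_basis[OF eb]]
      by simp
    assume "((inv_sqrt_deg_mat E *v (unitv s - unitv t)) \<bullet> b)\<^sup>2 / \<mu> b \<noteq> 0"
    then have "\<mu> b \<noteq> 0"
      by auto
    then show "0 \<le> (1 - \<mu> b / 2) ^ (L + 1) \<and> (1 - \<mu> b / 2) ^ (L + 1) \<le> \<epsilon>"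
      using norm_lap_error_factor_bounds[OF assms(1) deg eb \<open>b \<in> B\<close>, of "L + 1"] gap
      by linarith
  qed (use assms(5) in simp)
qed

end
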